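(* Let $d\in\mathbb{N}$ and let $\mathcal{P}$ be a partition of $\mathbb{R}^{d}$. Suppose there exist $D\in(0,\infty)$ and $\mu\in(0,\infty)$ such that every $X\in\mathcal{P}$ is Lebesgue measurable with $\mu<m(X)$ and $\operatorname{diam}(X)<D$. Then there exists $\vec{p}\in\mathbb{R}^{d}$ such that $|\mathcal{N}_{\overline{0}}(\vec{p})|\geq d+1$. Furthermore, $\mathcal{P}$ contains a $(d+1)$-clique.
   Context: $m$ is Lebesgue measure. On $\mathbb{R}^d$ use $d_{max}(\vec{x},\vec{y})=\max_i|x_i-y_i|$ and $\operatorname{diam}(X)=\sup\{d_{max}(\vec{x},\vec{y}):\vec{x},\vec{y}\in X\}$. $\mathcal{N}_{\overline{0}}(\vec{p})=\{X\in\mathcal{P}:\vec{p}\in\overline{X}\}$ ($\overline{X}$ the closure). Members $X,Y$ are adjacent if $\overline{X}\cap\overline{Y}\ne\emptyset$; an $n$-clique is a set of $n$ distinct pairwise adjacent members. *)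

theory Defs
  imports "HOL-Analysis.Analysis"
begin

definition d_max :: "real^'n \<Rightarrow> real^'n \<Rightarrow> real" where
  "d_max x y = Max (range (\<lambda>i. \<bar>x$i - y$i\<bar>))"

text \<open>Diameter as an extended real, so that the supremum is meaningful for unbounded sets.\<close>
definition diam_max :: "(real^'n) set \<Rightarrow> ereal" where
  "diam_max X = (SUP xy\<in>X \<times> X. ereal (d_max (fst xy) (snd xy)))"

definition is_partition :: "'a set set \<Rightarrow> bool" where
  "is_partition P \<longleftrightarrow> (\<forall>X\<in>P. X \<noteq> {}) \<and> \<Union>P = UNIV \<and>
     (\<forall>X\<in>P. \<forall>Y\<in>P. X \<noteq> Y \<longrightarrow> X \<inter> Y = {})"

definition nbhd0 :: "('a::topological_space) set set \<Rightarrow> 'a \<Rightarrow> 'a set set" where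
  "nbhd0 P p = {X\<in>P. p \<in> closure X}"

definition adjacent :: "('a::topological_space) set \<Rightarrow> 'a set \<Rightarrow> bool" where
  "adjacent X Y \<longleftrightarrow> closure X \<inter> closure Y \<noteq> {}"

definition is_clique :: "('a::topological_space) set set \<Rightarrow> nat \<Rightarrow> 'a set set \<Rightarrow> bool" where
  "is_clique P n C \<longleftrightarrow> C \<subseteq> P \<and> finite C \<and> card C = n \<and>
     (\<forall>X\<in>C. \<forall>Y\<in>C. X \<noteq> Y \<longrightarrow> adjacent X Y)"

end

theory Submission
  imports Defs
begin

(* Suppose every point lies in the closures of at most d members of P. The members meeting a
   large ball are finitely many, being disjoint sets of measure > mu inside a bounded set. A
   partition of unity subordinate to small neighbourhoods of these members, with one chosen point
   per member, gives a continuous map of the ball that moves points by less than the radius and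
   sends each point into the convex hull of at most d chosen points. Finitely many such hulls form
   a negligible set, yet by Brouwer's theorem the map covers a smaller ball: contradiction. *)

lemma d_max_le_diam_max:
  fixes X :: "(real^'n) set"
  assumes "x \<in> X" "y \<in> X"
  shows "ereal (d_max x y) \<le> diam_max X"
  unfolding diam_max_def using assms by (intro SUP_upper2[of "(x, y)"]) auto

lemma norm_le_card_mult_d_max:
  fixes x y :: "real^'n"
  shows "norm (x - y) \<le> real CARD('n) * d_max x y"
proof -
  have "norm (x - y) \<le> (\<Sum>i\<in>UNIV. \<bar>(x - y)$i\<bar>)" by (rule norm_le_l1_cart)
  also have "\<dots> \<le> (\<Sum>i\<in>(UNIV::'n set). d_max x y)"
    unfolding d_max_def by (intro sum_mono Max_ge) auto
  finally show ?thesis by simp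
qed

lemma dist_le_of_diam_max_less:
  fixes X :: "(real^'n) set"
  assumes "diam_max X < ereal D" "x \<in> X" "y \<in> X"
  shows "dist x y \<le> real CARD('n) * D"
proof -
  have "ereal (d_max x y) < ereal D"
    using d_max_le_diam_max[OF assms(2,3)] assms(1) by (rule le_less_trans)
  then have "d_max x y < D" by simp
  then have "real CARD('n) * d_max x y \<le> real CARD('n) * D" by (intro mult_left_mono) auto
  then show ?thesis using norm_le_card_mult_d_max[of x y] unfolding dist_norm by linarith
qed

lemma card_mult_le_emeasure_Union:
  assumes "finite F" "disjoint F" "F \<subseteq> sets M" "\<And>X. X \<in> F \<Longrightarrow> c \<le> emeasure M X"
  shows "of_nat (card F) * c \<le> emeasure M (\<Union>F)"
proof -
  have "of_nat (card F) * c = (\<Sum>X\<in>F. c)" by simp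
  also have "\<dots> \<le> (\<Sum>X\<in>F. emeasure M X)" using assms(4) by (rule sum_mono)
  also have "\<dots> = emeasure M (\<Union>F)"
    using assms(1-3) by (subst sum_emeasure) (auto simp: disjoint_family_on_def disjoint_def)
  finally show ?thesis .
qed

lemma finite_disjoint_family_of_large_measure:
  fixes \<mu> :: real
  assumes "disjoint F" "F \<subseteq> sets M" "0 < \<mu>" "\<And>X. X \<in> F \<Longrightarrow> ennreal \<mu> \<le> emeasure M X"
    and "\<Union>F \<subseteq> A" "A \<in> sets M" "emeasure M A < \<infinity>"
  shows "finite F"
proof (rule ccontr)
  assume "infinite F"
  then obtain G where G: "finite G" "G \<subseteq> F" "card G = Suc (nat \<lceil>measure M A / \<mu>\<rceil>)"
    using infinite_arbitrarily_large by blast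
  have "ennreal (real (card G) * \<mu>) = of_nat (card G) * ennreal \<mu>"
    using assms(3) by (simp add: ennreal_mult ennreal_of_nat_eq_real_of_nat)
  also have "\<dots> \<le> emeasure M (\<Union>G)"
    using G pairwise_subset[OF assms(1) G(2)] assms(2,4) by (intro card_mult_le_emeasure_Union) auto
  also have "\<dots> \<le> emeasure M A"
    using G assms(2,5,6) by (intro emeasure_mono) auto
  also have "\<dots> = ennreal (measure M A)"
    using assms(7) by (simp add: emeasure_eq_ennreal_measure)
  finally have "real (card G) * \<mu> \<le> measure M A" by simp
  then have "real (card G) \<le> measure M A / \<mu>" using assms(3) by (simp add: field_simps)
  with G(3) show False by linarith
qed

lemma negligible_convex_hull_card_le:
  fixes S :: "'a::euclidean_space set"
  assumes "finite S" "card S \<le> DIM('a)"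
  shows "negligible (convex hull S)"
proof -
  have "aff_dim S \<le> int (card S) - 1" using aff_dim_le_card[OF assms(1)] by simp
  also have "\<dots> < int DIM('a)" using assms(2) by simp
  finally have "aff_dim (convex hull S) \<noteq> int DIM('a)"
    by (simp add: aff_dim_convex_hull)
  then have "interior (convex hull S) = {}" by (rule low_dim_interior)
  then show ?thesis by (simp add: negligible_convex_interior)
qed

lemma negligible_Union_convex_hulls_card_le:
  fixes c :: "'b \<Rightarrow> 'a::euclidean_space"
  assumes "finite F"
  shows "negligible (\<Union> ((\<lambda>J. convex hull (c ` J)) ` {J. J \<subseteq> F \<and> card J \<le> DIM('a)}))"
proof (rule negligible_Union)
  show "finite ((\<lambda>J. convex hull (c ` J)) ` {J. J \<subseteq> F \<and> card J \<le> DIM('a)})"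
    using assms by (auto intro: finite_subset[of _ "Pow F"])
next
  fix T assume "T \<in> (\<lambda>J. convex hull (c ` J)) ` {J. J \<subseteq> F \<and> card J \<le> DIM('a)}"
  then obtain J where J: "J \<subseteq> F" "card J \<le> DIM('a)" "T = convex hull (c ` J)" by blast
  then have "finite J" using assms finite_subset by blast
  then have "card (c ` J) \<le> DIM('a)" using card_image_le[of J c] J(2) by linarith
  with \<open>finite J\<close> show "negligible T" unfolding J(3) by (intro negligible_convex_hull_card_le) auto
qed

lemma ball_subset_image_if_near_id:
  fixes g :: "'a::euclidean_space \<Rightarrow> 'a"
  assumes "continuous_on (cball a R) g" "0 \<le> r" "\<And>y. y \<in> cball a R \<Longrightarrow> dist (g y) y \<le> r"
  shows "ball a (R - r) \<subseteq> g ` cball a R"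
proof
  fix z assume z: "z \<in> ball a (R - r)"
  then have "R > 0" using assms(2) zero_le_dist[of a z] unfolding mem_ball by linarith
  have "\<exists>y\<in>cball a R. g y = z"
  proof (rule brouwer_surjective_cball[OF assms(1) \<open>R > 0\<close> z])
    fix x y assume "x \<in> ball a (R - r)" "y \<in> cball a R"
    then have "dist a x < R - r" "norm (y - g y) \<le> r"
      using assms(3) by (auto simp: dist_norm norm_minus_commute)
    moreover have "norm (a - (x + (y - g y))) \<le> norm (a - x) + norm (y - g y)"
      using norm_triangle_ineq4[of "a - x" "y - g y"] by (simp add: algebra_simps)
    ultimately show "x + (y - g y) \<in> cball a R" by (simp add: dist_norm)
  qed
  then show "z \<in> g ` cball a R" by blast
qed

lemma infdist_lessE:
  assumes "A \<noteq> {}" "infdist x A < e"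
  obtains a where "a \<in> A" "dist x a < e"
proof -
  have "bdd_below ((\<lambda>a. dist x a) ` A)" by (rule bdd_belowI2[where m = 0]) simp
  moreover have "(INF a\<in>A. dist x a) < e" using assms by (simp add: infdist_notempty)
  ultimately show ?thesis using that cINF_less_iff[OF assms(1)] by blast
qed

lemma sum_infdist_bounded_below:
  fixes J :: "'a::metric_space set set"
  assumes "finite J" "{} \<notin> J" "compact K" "\<And>x. x \<in> K \<Longrightarrow> \<exists>X\<in>J. x \<notin> closure X"
  shows "\<exists>e>0. \<forall>x\<in>K. e \<le> (\<Sum>X\<in>J. infdist x X)"
proof -
  have "(\<Sum>X\<in>J. infdist x X) \<noteq> 0" if "x \<in> K" for x
  proof
    assume "(\<Sum>X\<in>J. infdist x X) = 0"
    then have "\<forall>X\<in>J. infdist x X = 0" using assms(1) by (simp add: sum_nonneg_eq_0_iff infdist_nonneg)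
    moreover have "X \<noteq> {}" if "X \<in> J" for X using that assms(2) by blast
    ultimately have "x \<in> closure X" if "X \<in> J" for X using that by (simp add: in_closure_iff_infdist_zero)
    with assms(4)[OF that] show False by blast
  qed
  moreover have "continuous_on K (\<lambda>x. \<Sum>X\<in>J. infdist x X)" by (intro continuous_intros)
  ultimately obtain e where "0 < e" "\<forall>x\<in>K. e \<le> norm (\<Sum>X\<in>J. infdist x X)"
    using brouwer_compactness_lemma[OF assms(3)] by blast
  then show ?thesis by (auto simp: sum_nonneg infdist_nonneg)
qed

lemma uniform_infdist_order_bound:
  fixes F :: "'a::metric_space set set"
  assumes "finite F" "{} \<notin> F" "compact K"
    and order: "\<And>x. x \<in> K \<Longrightarrow> card {X\<in>F. x \<in> closure X} \<le> n"
  obtains \<delta> where "0 < \<delta>" "\<And>x. x \<in> K \<Longrightarrow> card {X\<in>F. infdist x X < \<delta>} \<le> n"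
proof -
  define JJ where "JJ = {J. J \<subseteq> F \<and> card J = Suc n}"
  have "finite JJ" unfolding JJ_def using assms(1) by (auto intro: finite_subset[of _ "Pow F"])
  have "\<exists>e>0. \<forall>x\<in>K. e \<le> (\<Sum>X\<in>J. infdist x X)" if "J \<in> JJ" for J
  proof -
    have J: "J \<subseteq> F" "finite J" "card J = Suc n"
      using that assms(1) unfolding JJ_def by (auto intro: finite_subset)
    have "\<exists>X\<in>J. x \<notin> closure X" if "x \<in> K" for x
    proof (rule ccontr)
      assume "\<not> ?thesis"
      then have "J \<subseteq> {X\<in>F. x \<in> closure X}" using J(1) by auto
      then have "card J \<le> n"
        using card_mono[of "{X\<in>F. x \<in> closure X}" J] assms(1) order[OF that] by simp
      with J(3) show False by simp
    qed
    moreover have "{} \<notin> J" using J(1) assms(2) by blast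
    ultimately show ?thesis using sum_infdist_bounded_below[OF J(2) _ assms(3)] by blast
  qed
  then obtain E where E: "\<And>J. J \<in> JJ \<Longrightarrow> 0 < E J \<and> (\<forall>x\<in>K. E J \<le> (\<Sum>X\<in>J. infdist x X))"
    by metis
  define m where "m = Min (insert 1 (E ` JJ))"
  have "0 < m" unfolding m_def using \<open>finite JJ\<close> E by (subst Min_gr_iff) auto
  have m_le: "m \<le> E J" if "J \<in> JJ" for J unfolding m_def using \<open>finite JJ\<close> that by simp
  define \<delta> where "\<delta> = m / Suc n"
  show ?thesis
  proof
    show "0 < \<delta>" unfolding \<delta>_def using \<open>0 < m\<close> by simp
  next
    fix x assume "x \<in> K"
    show "card {X\<in>F. infdist x X < \<delta>} \<le> n"
    proof (rule ccontr)
      assume "\<not> ?thesis"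
      then have "Suc n \<le> card {X\<in>F. infdist x X < \<delta>}" by simp
      then obtain J where J: "J \<subseteq> {X\<in>F. infdist x X < \<delta>}" "card J = Suc n" "finite J"
        by (rule obtain_subset_with_card_n)
      then have "J \<in> JJ" unfolding JJ_def by auto
      have "(\<Sum>X\<in>J. infdist x X) < (\<Sum>X\<in>J. \<delta>)"
        using J by (intro sum_strict_mono) auto
      also have "\<dots> = m" using J(2) by (simp add: \<delta>_def)
      also have "\<dots> \<le> E J" using m_le[OF \<open>J \<in> JJ\<close>] .
      also have "\<dots> \<le> (\<Sum>X\<in>J. infdist x X)" using E[OF \<open>J \<in> JJ\<close>] \<open>x \<in> K\<close> by blast
      finally show False by simp
    qed
  qed
qed

lemma continuous_map_into_hulls_of_nearby:
  fixes F :: "'a::metric_space set set" and c :: "'a set \<Rightarrow> 'b::real_normed_vector"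
  assumes "finite F" "0 < \<delta>" "S \<subseteq> \<Union>F"
  obtains g where "continuous_on S g"
    "\<And>x. x \<in> S \<Longrightarrow> g x \<in> convex hull (c ` {X\<in>F. infdist x X < \<delta>})"
proof
  define w where "w X x = max 0 (\<delta> - infdist x X)" for X :: "'a set" and x :: 'a
  define W where "W x = (\<Sum>X\<in>F. w X x)" for x
  have w_nonneg: "0 \<le> w X x" for X x unfolding w_def by simp
  have W_pos: "0 < W x" if "x \<in> S" for x
  proof -
    obtain X where "X \<in> F" "x \<in> X" using \<open>x \<in> S\<close> assms(3) by blast
    then have "\<delta> \<le> W x"
      using member_le_sum[of X F "\<lambda>X. w X x"] assms(1,2) w_nonneg by (simp add: W_def w_def)
    with assms(2) show ?thesis by simp
  qed
  have "continuous_on S (w X)" for X unfolding w_def by (intro continuous_intros)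
  then have "continuous_on S W" unfolding W_def by (intro continuous_on_sum)
  with \<open>\<And>X. continuous_on S (w X)\<close> show "continuous_on S (\<lambda>x. \<Sum>X\<in>F. (w X x / W x) *\<^sub>R c X)"
    using W_pos by (intro continuous_on_sum continuous_on_scaleR continuous_on_divide continuous_on_const)
      (auto simp: less_imp_neq[symmetric])
  fix x assume "x \<in> S"
  define N where "N = {X\<in>F. infdist x X < \<delta>}"
  have "finite N" using assms(1) unfolding N_def by simp
  have outside: "w X x = 0" if "X \<in> F - N" for X using that unfolding w_def N_def by auto
  have "(\<Sum>X\<in>F. (w X x / W x) *\<^sub>R c X) = (\<Sum>X\<in>N. (w X x / W x) *\<^sub>R c X)"
    using assms(1) outside by (intro sum.mono_neutral_right) (auto simp: N_def)
  moreover have "(\<Sum>X\<in>N. w X x) = W x"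
    using assms(1) outside unfolding W_def by (intro sum.mono_neutral_left) (auto simp: N_def)
  then have "(\<Sum>X\<in>N. w X x / W x) = 1"
    using W_pos[OF \<open>x \<in> S\<close>] by (simp add: sum_divide_distrib[symmetric])
  ultimately show "(\<Sum>X\<in>F. (w X x / W x) *\<^sub>R c X) \<in> convex hull (c ` N)"
    using \<open>finite N\<close> W_pos[OF \<open>x \<in> S\<close>] w_nonneg
    by (simp only:) (intro convex_sum convex_convex_hull ballI hull_inc imageI divide_nonneg_pos)
qed

lemma convex_hull_chosen_points_subset_cball:
  fixes c :: "'a set \<Rightarrow> 'a::real_normed_vector"
  assumes "\<And>X. X \<in> N \<Longrightarrow> c X \<in> X \<and> infdist x X < \<delta>"
    and "\<And>X y z. X \<in> N \<Longrightarrow> y \<in> X \<Longrightarrow> z \<in> X \<Longrightarrow> dist y z \<le> \<Delta>"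
  shows "convex hull (c ` N) \<subseteq> cball x (\<Delta> + \<delta>)"
proof (intro hull_minimal convex_cball image_subsetI)
  fix X assume "X \<in> N"
  with assms(1) have "c X \<in> X" "infdist x X < \<delta>" by auto
  then obtain y where "y \<in> X" "dist x y < \<delta>" using infdist_lessE by blast
  with assms(2)[OF \<open>X \<in> N\<close> \<open>y \<in> X\<close> \<open>c X \<in> X\<close>] show "c X \<in> cball x (\<Delta> + \<delta>)"
    using dist_triangle[of x "c X" y] by simp
qed

lemma cover_of_cball_has_point_of_order_gt_DIM:
  fixes F :: "'a::euclidean_space set set"
  assumes "finite F" "{} \<notin> F" "cball a R \<subseteq> \<Union>F" "0 \<le> \<Delta>" "\<Delta> < R"
    and diam: "\<And>X x y. X \<in> F \<Longrightarrow> x \<in> X \<Longrightarrow> y \<in> X \<Longrightarrow> dist x y \<le> \<Delta>"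
  shows "\<exists>x\<in>cball a R. DIM('a) < card {X\<in>F. x \<in> closure X}"
proof (rule ccontr)
  assume "\<not> ?thesis"
  then have "\<And>x. x \<in> cball a R \<Longrightarrow> card {X\<in>F. x \<in> closure X} \<le> DIM('a)"
    by (simp add: not_less)
  then obtain \<delta>\<^sub>0 where "0 < \<delta>\<^sub>0"
    and order: "\<And>x. x \<in> cball a R \<Longrightarrow> card {X\<in>F. infdist x X < \<delta>\<^sub>0} \<le> DIM('a)"
    using uniform_infdist_order_bound[OF assms(1,2) compact_cball] by blast
  define \<delta> where "\<delta> = min \<delta>\<^sub>0 ((R - \<Delta>) / 2)"
  have "0 < \<delta>" "\<Delta> + \<delta> < R" using \<open>0 < \<delta>\<^sub>0\<close> assms(5) by (auto simp: \<delta>_def min_def field_simps)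
  define N where "N x = {X\<in>F. infdist x X < \<delta>}" for x
  have N_small: "N x \<subseteq> F \<and> card (N x) \<le> DIM('a)" if "x \<in> cball a R" for x
  proof -
    have "N x \<subseteq> {X\<in>F. infdist x X < \<delta>\<^sub>0}" by (auto simp: N_def \<delta>_def)
    then have "card (N x) \<le> card {X\<in>F. infdist x X < \<delta>\<^sub>0}" using assms(1) by (intro card_mono) auto
    with order[OF that] show ?thesis by (auto simp: N_def)
  qed
  define c where "c X = (SOME x. x \<in> X)" for X :: "'a set"
  have c: "c X \<in> X" if "X \<in> F" for X
    unfolding c_def using that assms(2) by (metis some_in_eq)
  obtain g where g_cont: "continuous_on (cball a R) g"
    and g_hull: "\<And>x. x \<in> cball a R \<Longrightarrow> g x \<in> convex hull (c ` N x)"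
    using continuous_map_into_hulls_of_nearby[OF assms(1) \<open>0 < \<delta>\<close> assms(3)] unfolding N_def by metis
  have "dist (g x) x \<le> \<Delta> + \<delta>" if "x \<in> cball a R" for x
  proof -
    have "convex hull (c ` N x) \<subseteq> cball x (\<Delta> + \<delta>)"
      using c diam by (intro convex_hull_chosen_points_subset_cball) (auto simp: N_def)
    then show ?thesis using g_hull[OF that] by (auto simp: dist_commute)
  qed
  then have "ball a (R - (\<Delta> + \<delta>)) \<subseteq> g ` cball a R"
    using \<open>0 < \<delta>\<close> assms(4) by (intro ball_subset_image_if_near_id g_cont) auto
  also have "\<dots> \<subseteq> \<Union> ((\<lambda>J. convex hull (c ` J)) ` {J. J \<subseteq> F \<and> card J \<le> DIM('a)})"
    (is "_ \<subseteq> ?U") using g_hull N_small by blast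
  finally have "ball a (R - (\<Delta> + \<delta>)) \<subseteq> ?U" .
  moreover have "negligible ?U" using assms(1) by (rule negligible_Union_convex_hulls_card_le)
  ultimately have "negligible (ball a (R - (\<Delta> + \<delta>)))" by (rule negligible_subset[rotated])
  with \<open>\<Delta> + \<delta> < R\<close> show False using open_not_negligible[of "ball a (R - (\<Delta> + \<delta>))"] by simp
qed

lemma finite_members_meeting_cball:
  fixes P :: "'a::euclidean_space set set" and \<mu> :: real
  assumes "disjoint P" "0 < \<mu>"
    and "\<And>X. X \<in> P \<Longrightarrow> X \<in> sets lebesgue \<and> ennreal \<mu> \<le> emeasure lebesgue X"
    and diam: "\<And>X x y. X \<in> P \<Longrightarrow> x \<in> X \<Longrightarrow> y \<in> X \<Longrightarrow> dist x y \<le> \<Delta>"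
  shows "finite {X\<in>P. X \<inter> cball a r \<noteq> {}}"
proof (rule finite_disjoint_family_of_large_measure)
  show "\<Union>{X\<in>P. X \<inter> cball a r \<noteq> {}} \<subseteq> cball a (r + \<Delta>)"
  proof
    fix x assume "x \<in> \<Union>{X\<in>P. X \<inter> cball a r \<noteq> {}}"
    then obtain X y where "X \<in> P" "x \<in> X" "y \<in> X" "dist a y \<le> r" by auto
    then show "x \<in> cball a (r + \<Delta>)" using diam[of X y x] dist_triangle[of a x y] by simp
  qed
  show "cball a (r + \<Delta>) \<in> sets lebesgue" "emeasure lebesgue (cball a (r + \<Delta>)) < \<infinity>"
    using lmeasurable_cball unfolding fmeasurable_def by blast+
  show "disjoint {X\<in>P. X \<inter> cball a r \<noteq> {}}" by (rule pairwise_subset[OF assms(1)]) auto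
qed (use assms(2,3) in blast)+

lemma is_clique_if_subset_nbhd0:
  assumes "S \<subseteq> nbhd0 P p" "finite S" "n \<le> card S"
  shows "\<exists>C. is_clique P n C"
proof -
  obtain C where "C \<subseteq> S" "card C = n" "finite C"
    using assms(3) by (rule obtain_subset_with_card_n)
  with assms(1) show ?thesis unfolding is_clique_def adjacent_def nbhd0_def by blast
qed

theorem mainTheorem20:
  fixes P :: "(real^'n) set set" and D \<mu> :: real
  assumes "is_partition P"
    and "0 < D" and "0 < \<mu>"
    and "\<forall>X\<in>P. X \<in> sets lebesgue \<and> ennreal \<mu> < emeasure lebesgue X \<and> diam_max X < ereal D"
  shows "(\<exists>p. \<exists>S\<subseteq>nbhd0 P p. finite S \<and> card S \<ge> CARD('n) + 1)
         \<and> (\<exists>C. is_clique P (CARD('n) + 1) C)"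
proof -
  define \<Delta> where "\<Delta> = real CARD('n) * D"
  define F where "F = {X\<in>P. X \<inter> cball 0 (\<Delta> + 1) \<noteq> {}}"
  have diam: "dist x y \<le> \<Delta>" if "X \<in> P" "x \<in> X" "y \<in> X" for X x y
    using dist_le_of_diam_max_less that assms(4) unfolding \<Delta>_def by blast
  have "disjoint P" "{} \<notin> P" "\<Union>P = UNIV"
    using assms(1) unfolding is_partition_def pairwise_def disjnt_def by auto
  have "finite F"
    unfolding F_def using \<open>disjoint P\<close> assms(3,4) diam
    by (intro finite_members_meeting_cball) (auto intro: less_imp_le)
  moreover have "cball 0 (\<Delta> + 1) \<subseteq> \<Union>F" using \<open>\<Union>P = UNIV\<close> unfolding F_def by blast
  moreover have "0 \<le> \<Delta>" using assms(2) unfolding \<Delta>_def by simp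
  ultimately obtain p where "CARD('n) < card {X\<in>F. p \<in> closure X}"
    using cover_of_cball_has_point_of_order_gt_DIM[of F 0 "\<Delta> + 1" \<Delta>] \<open>{} \<notin> P\<close> diam
    unfolding F_def by fastforce
  define S where "S = {X\<in>F. p \<in> closure X}"
  have "CARD('n) + 1 \<le> card S" using \<open>CARD('n) < card {X\<in>F. p \<in> closure X}\<close> by (simp add: S_def)
  moreover have "S \<subseteq> nbhd0 P p" unfolding S_def nbhd0_def F_def by auto
  moreover have "finite S" using \<open>finite F\<close> unfolding S_def by simp
  ultimately show ?thesis using is_clique_if_subset_nbhd0[of S P p "CARD('n) + 1"] by blast
qed

end
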